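(* Let $(T_1,T_2,V)$ on $\mathcal K\supseteq\mathcal H$ be a $\Gamma_3$-isometric dilation of a $\Gamma_3$-contraction $(S_1,S_2,P)$ on $\mathcal H$. If $(T_1,T_2,V)$ is minimal, then $(T_1^*,T_2^*,V^* )$ is a $\Gamma_3$-co-isometric extension of $(S_1^*,S_2^*,P^* )$, i.e. $\mathcal H$ is invariant under $T_1^*,T_2^*,V^*$ and $T_1^*|_{\mathcal H}=S_1^*$, $T_2^*|_{\mathcal H}=S_2^*$, $V^*|_{\mathcal H}=P^*$. Conversely, if $(T_1,T_2,V)$ is a $\Gamma_3$-isometry on $\mathcal K\supseteq\mathcal H$ such that $(T_1^*,T_2^*,V^* )$ is a $\Gamma_3$-co-isometric extension of $(S_1^*,S_2^*,P^* )$, then $(T_1,T_2,V)$ is a $\Gamma_3$-isometric dilation of $(S_1,S_2,P)$.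
   Context: $\Gamma_3=\{(z_1+z_2+z_3,\,z_1z_2+z_2z_3+z_3z_1,\,z_1z_2z_3):|z_i|\le1\}$, $b\Gamma_3$ the same with $|z_i|=1$. A $\Gamma_3$-contraction is a commuting operator triple with Taylor joint spectrum in $\Gamma_3$ and $\|f(S_1,S_2,P)\|\le\sup_{\Gamma_3}|f|$ for rational $f$ with poles off $\Gamma_3$; a $\Gamma_3$-unitary is a commuting normal triple with Taylor joint spectrum in $b\Gamma_3$; a $\Gamma_3$-isometry is the restriction of a $\Gamma_3$-unitary to a common invariant subspace; a $\Gamma_3$-co-isometry is a triple whose adjoint triple is a $\Gamma_3$-isometry. A $\Gamma_3$-isometric dilation of $(S_1,S_2,P)$ is a $\Gamma_3$-isometry $(T_1,T_2,V)$ on $\mathcal K\supseteq\mathcal H$ with $P_{\mathcal H}T_1^{m_1}T_2^{m_2}V^n|_{\mathcal H}=S_1^{m_1}S_2^{m_2}P^n$ for all integers $m_1,m_2,n\ge0$; it is minimal if $\mathcal K$ is the closed linear span of $\{T_1^{m_1}T_2^{m_2}V^nh:h\in\mathcal H,\ m_1,m_2,n\ge0\}$. *)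

theory Defs
  imports "HOL-Analysis.Analysis"
begin

text \<open>The distribution has no complex inner product spaces, so we introduce them
as a type class: a real normed vector space with a compatible complex scalar
multiplication and a complex inner product (linear in the second argument)
inducing the norm.\<close>

class complex_inner = real_normed_vector +
  fixes scaleC :: "complex \<Rightarrow> 'a \<Rightarrow> 'a"
    and cinner :: "'a \<Rightarrow> 'a \<Rightarrow> complex"
  assumes scaleC_add_right: "scaleC a (x + y) = scaleC a x + scaleC a y"
    and scaleC_add_left: "scaleC (a + b) x = scaleC a x + scaleC b x"
    and scaleC_scaleC: "scaleC a (scaleC b x) = scaleC (a * b) x"
    and scaleC_one: "scaleC 1 x = x"
    and scaleR_scaleC: "scaleR r x = scaleC (complex_of_real r) x"
    and cinner_conj: "cinner x y = cnj (cinner y x)"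
    and cinner_add_right: "cinner x (y + z) = cinner x y + cinner x z"
    and cinner_scaleC_right: "cinner x (scaleC a y) = a * cinner x y"
    and cinner_self_norm: "cinner x x = complex_of_real ((norm x)\<^sup>2)"

class chilbert = complex_inner + complete_space

instantiation complex :: complex_inner
begin
definition scaleC_complex :: "complex \<Rightarrow> complex \<Rightarrow> complex" where
  "scaleC_complex a x = a * x"
definition cinner_complex :: "complex \<Rightarrow> complex \<Rightarrow> complex" where
  "cinner_complex x y = cnj x * y"
instance proof
  fix a b x y z :: complex and r :: real
  show "scaleC a (x + y) = scaleC a x + scaleC a y" by (simp add: scaleC_complex_def algebra_simps)
  show "scaleC (a + b) x = scaleC a x + scaleC b x" by (simp add: scaleC_complex_def algebra_simps)
  show "scaleC a (scaleC b x) = scaleC (a * b) x" by (simp add: scaleC_complex_def algebra_simps)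
  show "scaleC 1 x = x" by (simp add: scaleC_complex_def)
  show "scaleR r x = scaleC (complex_of_real r) x" by (simp add: scaleC_complex_def scaleR_conv_of_real)
  show "cinner x y = cnj (cinner y x)" by (simp add: cinner_complex_def mult.commute)
  show "cinner x (y + z) = cinner x y + cinner x z" by (simp add: cinner_complex_def algebra_simps)
  show "cinner x (scaleC a y) = a * cinner x y" by (simp add: cinner_complex_def scaleC_complex_def algebra_simps)
  show "cinner x x = complex_of_real ((norm x)\<^sup>2)" by (simp add: cinner_complex_def complex_norm_square[symmetric] mult.commute)
qed
end

instance complex :: chilbert ..

definition csubspace :: "'a::complex_inner set \<Rightarrow> bool" where
  "csubspace M \<longleftrightarrow> 0 \<in> M \<and> (\<forall>x\<in>M. \<forall>y\<in>M. x + y \<in> M) \<and> (\<forall>c. \<forall>x\<in>M. scaleC c x \<in> M)"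

definition closed_csubspace :: "'a::complex_inner set \<Rightarrow> bool" where
  "closed_csubspace M \<longleftrightarrow> csubspace M \<and> closed M"

definition cspan :: "'a::complex_inner set \<Rightarrow> 'a set" where
  "cspan S = {x. \<exists>F c. finite F \<and> F \<subseteq> S \<and> x = (\<Sum>v\<in>F. scaleC (c v) v)}"

text \<open>A bounded linear operator on the closed subspace M (values outside M irrelevant).\<close>
definition bounded_op_on :: "'a::complex_inner set \<Rightarrow> ('a \<Rightarrow> 'a) \<Rightarrow> bool" where
  "bounded_op_on M T \<longleftrightarrow> (\<forall>x\<in>M. T x \<in> M)
     \<and> (\<forall>x\<in>M. \<forall>y\<in>M. T (x + y) = T x + T y)
     \<and> (\<forall>c. \<forall>x\<in>M. T (scaleC c x) = scaleC c (T x))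
     \<and> (\<exists>C. \<forall>x\<in>M. norm (T x) \<le> C * norm x)"

definition adj_on :: "'a::complex_inner set \<Rightarrow> ('a \<Rightarrow> 'a) \<Rightarrow> 'a \<Rightarrow> 'a" where
  "adj_on M T = (\<lambda>y. THE z. z \<in> M \<and> (\<forall>x\<in>M. cinner (T x) y = cinner x z))"

definition proj_on :: "'a::complex_inner set \<Rightarrow> 'a \<Rightarrow> 'a" where
  "proj_on M x = (THE y. y \<in> M \<and> (\<forall>z\<in>M. cinner z (x - y) = 0))"

definition inv_op_on :: "'a set \<Rightarrow> ('a \<Rightarrow> 'a) \<Rightarrow> 'a \<Rightarrow> 'a" where
  "inv_op_on M A x = (THE y. y \<in> M \<and> A y = x)"

definition commute_on :: "'a set \<Rightarrow> ('a \<Rightarrow> 'a) \<Rightarrow> ('a \<Rightarrow> 'a) \<Rightarrow> bool" where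
  "commute_on M A B \<longleftrightarrow> (\<forall>x\<in>M. A (B x) = B (A x))"

definition normal_on :: "'a::complex_inner set \<Rightarrow> ('a \<Rightarrow> 'a) \<Rightarrow> bool" where
  "normal_on M T \<longleftrightarrow> (\<forall>x\<in>M. T (adj_on M T x) = adj_on M T (T x))"

text \<open>Koszul complex of a triple (A1,A2,A3) on M:
  0 \<rightarrow> M \<rightarrow> M^3 \<rightarrow> M^3 \<rightarrow> M \<rightarrow> 0 with maps
  x \<mapsto> (A1 x, A2 x, A3 x),
  (y1,y2,y3) \<mapsto> (A2 y3 - A3 y2, A3 y1 - A1 y3, A1 y2 - A2 y1),
  (z1,z2,z3) \<mapsto> A1 z1 + A2 z2 + A3 z3
  (isomorphic to the exterior-algebra Koszul complex).\<close>
definition koszul_exact :: "'a::complex_inner set \<Rightarrow> ('a \<Rightarrow> 'a) \<Rightarrow> ('a \<Rightarrow> 'a) \<Rightarrow> ('a \<Rightarrow> 'a) \<Rightarrow> bool" where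
  "koszul_exact M A1 A2 A3 \<longleftrightarrow>
     inj_on (\<lambda>x. (A1 x, A2 x, A3 x)) M
   \<and> {(y1, y2, y3). y1 \<in> M \<and> y2 \<in> M \<and> y3 \<in> M \<and>
        A2 y3 - A3 y2 = 0 \<and> A3 y1 - A1 y3 = 0 \<and> A1 y2 - A2 y1 = 0}
       = (\<lambda>x. (A1 x, A2 x, A3 x)) ` M
   \<and> {(z1, z2, z3). z1 \<in> M \<and> z2 \<in> M \<and> z3 \<in> M \<and> A1 z1 + A2 z2 + A3 z3 = 0}
       = (\<lambda>(y1, y2, y3). (A2 y3 - A3 y2, A3 y1 - A1 y3, A1 y2 - A2 y1)) ` (M \<times> M \<times> M)
   \<and> (\<lambda>(z1, z2, z3). A1 z1 + A2 z2 + A3 z3) ` (M \<times> M \<times> M) = M"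

definition taylor_spectrum :: "'a::complex_inner set \<Rightarrow> ('a \<Rightarrow> 'a) \<Rightarrow> ('a \<Rightarrow> 'a) \<Rightarrow> ('a \<Rightarrow> 'a)
    \<Rightarrow> (complex \<times> complex \<times> complex) set" where
  "taylor_spectrum M T1 T2 T3 = {(l1, l2, l3).
     \<not> koszul_exact M (\<lambda>x. T1 x - scaleC l1 x) (\<lambda>x. T2 x - scaleC l2 x) (\<lambda>x. T3 x - scaleC l3 x)}"

definition Gamma3 :: "(complex \<times> complex \<times> complex) set" where
  "Gamma3 = {(z1 + z2 + z3, z1 * z2 + z2 * z3 + z3 * z1, z1 * z2 * z3) | z1 z2 z3.
              cmod z1 \<le> 1 \<and> cmod z2 \<le> 1 \<and> cmod z3 \<le> 1}"

definition bGamma3 :: "(complex \<times> complex \<times> complex) set" where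
  "bGamma3 = {(z1 + z2 + z3, z1 * z2 + z2 * z3 + z3 * z1, z1 * z2 * z3) | z1 z2 z3.
              cmod z1 = 1 \<and> cmod z2 = 1 \<and> cmod z3 = 1}"

definition poly3 :: "(nat \<times> nat \<times> nat \<Rightarrow> complex) \<Rightarrow> bool" where
  "poly3 c \<longleftrightarrow> finite {m. c m \<noteq> 0}"

definition peval :: "(nat \<times> nat \<times> nat \<Rightarrow> complex) \<Rightarrow> complex \<times> complex \<times> complex \<Rightarrow> complex" where
  "peval c z = (\<Sum>m\<in>{m. c m \<noteq> 0}. case m of (i, j, k) \<Rightarrow>
      c m * fst z ^ i * fst (snd z) ^ j * snd (snd z) ^ k)"

definition opeval :: "(nat \<times> nat \<times> nat \<Rightarrow> complex) \<Rightarrow> ('a::complex_inner \<Rightarrow> 'a) \<Rightarrow> ('a \<Rightarrow> 'a)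
    \<Rightarrow> ('a \<Rightarrow> 'a) \<Rightarrow> 'a \<Rightarrow> 'a" where
  "opeval c T1 T2 T3 x = (\<Sum>m\<in>{m. c m \<noteq> 0}. case m of (i, j, k) \<Rightarrow>
      scaleC (c m) ((T1 ^^ i) ((T2 ^^ j) ((T3 ^^ k) x))))"

text \<open>von Neumann inequality for rational functions f = p/q with q zero-free on Gamma3.\<close>
definition gamma3_vN :: "'a::complex_inner set \<Rightarrow> ('a \<Rightarrow> 'a) \<Rightarrow> ('a \<Rightarrow> 'a) \<Rightarrow> ('a \<Rightarrow> 'a) \<Rightarrow> bool" where
  "gamma3_vN M S1 S2 P \<longleftrightarrow> (\<forall>p q. poly3 p \<and> poly3 q \<and> (\<forall>z\<in>Gamma3. peval q z \<noteq> 0) \<longrightarrow>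
     (\<forall>x\<in>M. norm (opeval p S1 S2 P (inv_op_on M (opeval q S1 S2 P) x))
              \<le> (SUP z\<in>Gamma3. cmod (peval p z / peval q z)) * norm x))"

definition gamma3_contraction :: "'a::complex_inner set \<Rightarrow> ('a \<Rightarrow> 'a) \<Rightarrow> ('a \<Rightarrow> 'a) \<Rightarrow> ('a \<Rightarrow> 'a) \<Rightarrow> bool" where
  "gamma3_contraction M S1 S2 P \<longleftrightarrow>
     bounded_op_on M S1 \<and> bounded_op_on M S2 \<and> bounded_op_on M P
   \<and> commute_on M S1 S2 \<and> commute_on M S1 P \<and> commute_on M S2 P
   \<and> taylor_spectrum M S1 S2 P \<subseteq> Gamma3
   \<and> gamma3_vN M S1 S2 P"

definition gamma3_unitary :: "'a::complex_inner set \<Rightarrow> ('a \<Rightarrow> 'a) \<Rightarrow> ('a \<Rightarrow> 'a) \<Rightarrow> ('a \<Rightarrow> 'a) \<Rightarrow> bool" where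
  "gamma3_unitary M U1 U2 W \<longleftrightarrow>
     bounded_op_on M U1 \<and> bounded_op_on M U2 \<and> bounded_op_on M W
   \<and> commute_on M U1 U2 \<and> commute_on M U1 W \<and> commute_on M U2 W
   \<and> normal_on M U1 \<and> normal_on M U2 \<and> normal_on M W
   \<and> taylor_spectrum M U1 U2 W \<subseteq> bGamma3"

text \<open>Gamma3-isometry: restriction of a Gamma3-unitary (on a Hilbert space of type 'n)
  to a common invariant subspace, the subspace being identified with M via an
  isometric linear embedding J.  The space 'n is a parameter; in hypotheses it is
  universally quantified at theorem level, which renders the existential.\<close>
definition gamma3_isometry :: "'n::chilbert itself \<Rightarrow> 'a::complex_inner set
    \<Rightarrow> ('a \<Rightarrow> 'a) \<Rightarrow> ('a \<Rightarrow> 'a) \<Rightarrow> ('a \<Rightarrow> 'a) \<Rightarrow> bool" where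
  "gamma3_isometry _ M T1 T2 V \<longleftrightarrow>
     bounded_op_on M T1 \<and> bounded_op_on M T2 \<and> bounded_op_on M V
   \<and> (\<exists>(J :: 'a \<Rightarrow> 'n) U1 U2 W. gamma3_unitary UNIV U1 U2 W
        \<and> (\<forall>x\<in>M. \<forall>y\<in>M. J (x + y) = J x + J y)
        \<and> (\<forall>c. \<forall>x\<in>M. J (scaleC c x) = scaleC c (J x))
        \<and> (\<forall>x\<in>M. \<forall>y\<in>M. cinner (J x) (J y) = cinner x y)
        \<and> (\<forall>x\<in>M. U1 (J x) = J (T1 x) \<and> U2 (J x) = J (T2 x) \<and> W (J x) = J (V x)))"

definition gamma3_coisometry :: "'n::chilbert itself \<Rightarrow> 'a::complex_inner set
    \<Rightarrow> ('a \<Rightarrow> 'a) \<Rightarrow> ('a \<Rightarrow> 'a) \<Rightarrow> ('a \<Rightarrow> 'a) \<Rightarrow> bool" where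
  "gamma3_coisometry N M A1 A2 A3 \<longleftrightarrow>
     bounded_op_on M A1 \<and> bounded_op_on M A2 \<and> bounded_op_on M A3
   \<and> gamma3_isometry N M (adj_on M A1) (adj_on M A2) (adj_on M A3)"

section \<open>Dilations and extensions (K is the whole space of type 'a, H a closed subspace)\<close>

definition gamma3_isometric_dilation :: "'n::chilbert itself \<Rightarrow> 'a::complex_inner set
    \<Rightarrow> ('a \<Rightarrow> 'a) \<Rightarrow> ('a \<Rightarrow> 'a) \<Rightarrow> ('a \<Rightarrow> 'a) \<Rightarrow> ('a \<Rightarrow> 'a) \<Rightarrow> ('a \<Rightarrow> 'a) \<Rightarrow> ('a \<Rightarrow> 'a) \<Rightarrow> bool" where
  "gamma3_isometric_dilation N H S1 S2 P T1 T2 V \<longleftrightarrow>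
     gamma3_isometry N UNIV T1 T2 V
   \<and> (\<forall>m1 m2 n. \<forall>h\<in>H. proj_on H ((T1 ^^ m1) ((T2 ^^ m2) ((V ^^ n) h)))
                         = (S1 ^^ m1) ((S2 ^^ m2) ((P ^^ n) h)))"

definition minimal_dilation :: "'a::complex_inner set \<Rightarrow> ('a \<Rightarrow> 'a) \<Rightarrow> ('a \<Rightarrow> 'a) \<Rightarrow> ('a \<Rightarrow> 'a) \<Rightarrow> bool" where
  "minimal_dilation H T1 T2 V \<longleftrightarrow>
     closure (cspan {(T1 ^^ m1) ((T2 ^^ m2) ((V ^^ n) h)) | m1 m2 n h. h \<in> H}) = UNIV"

definition gamma3_coisometric_extension :: "'n::chilbert itself \<Rightarrow> 'a::complex_inner set
    \<Rightarrow> ('a \<Rightarrow> 'a) \<Rightarrow> ('a \<Rightarrow> 'a) \<Rightarrow> ('a \<Rightarrow> 'a) \<Rightarrow> ('a \<Rightarrow> 'a) \<Rightarrow> ('a \<Rightarrow> 'a) \<Rightarrow> ('a \<Rightarrow> 'a) \<Rightarrow> bool" where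
  "gamma3_coisometric_extension N H R1 R2 R3 A1 A2 A3 \<longleftrightarrow>
     gamma3_coisometry N UNIV A1 A2 A3
   \<and> (\<forall>h\<in>H. A1 h \<in> H \<and> A2 h \<in> H \<and> A3 h \<in> H)
   \<and> (\<forall>h\<in>H. A1 h = R1 h \<and> A2 h = R2 h \<and> A3 h = R3 h)"

end

theory Submission
  imports Defs
begin

text \<open>If each adjoint \<open>T\<^sup>*\<close> leaves \<open>H\<close> invariant and restricts to \<open>S\<^sup>*\<close>, then
\<open>\<langle>T x, k\<rangle> = \<langle>x, S\<^sup>* k\<rangle> = \<langle>P\<^sub>H x, S\<^sup>* k\<rangle> = \<langle>S P\<^sub>H x, k\<rangle>\<close> for \<open>k \<in> H\<close>, i.e.
\<open>P\<^sub>H T = S P\<^sub>H\<close>, and iterating gives the dilation identities.  Conversely, the dilation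
identities give \<open>\<langle>X, T\<^sup>* h - S\<^sup>* h\<rangle> = 0\<close> for every generator \<open>X = T\<^sub>1\<^sup>a T\<^sub>2\<^sup>b V\<^sup>c h'\<close>
(their set is invariant under the commuting \<open>T\<^sub>i\<close>); by minimality they span a dense
subspace, so \<open>T\<^sup>* h = S\<^sup>* h\<close>.  The adjoint triple of a \<open>\<Gamma>\<^sub>3\<close>-isometry is a
\<open>\<Gamma>\<^sub>3\<close>-co-isometry because \<open>T\<^sup>*\<^sup>* = T\<close>.  Adjoints and projections exist by the
projection theorem and the Riesz representation theorem.\<close>

section \<open>Complex inner product spaces\<close>

lemma scaleC_zero_left [simp]: "scaleC 0 (x::'a::complex_inner) = 0"
proof -
  have "scaleC 0 x = scaleC 0 x + scaleC 0 x" using scaleC_add_left[of 0 0 x] by simp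
  thus ?thesis by simp
qed

lemma scaleC_minus_one: "scaleC (-1) (x::'a::complex_inner) = - x"
proof -
  have "scaleC 1 x + scaleC (-1) x = 0" using scaleC_add_left[of 1 "-1" x] by simp
  thus ?thesis by (simp add: scaleC_one eq_neg_iff_add_eq_0 add.commute)
qed

lemma cinner_add_left: "cinner ((x::'a::complex_inner) + y) z = cinner x z + cinner y z"
  by (metis cinner_conj cinner_add_right complex_cnj_add)

lemma cinner_scaleC_left: "cinner (scaleC a (x::'a::complex_inner)) y = cnj a * cinner x y"
  by (metis cinner_conj cinner_scaleC_right complex_cnj_mult)

lemma cinner_zero_left [simp]: "cinner 0 (x::'a::complex_inner) = 0"
  using cinner_scaleC_left[of 0 0 x] by simp

lemma cinner_minus_right: "cinner (x::'a::complex_inner) (- y) = - cinner x y"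
  by (metis cinner_scaleC_right scaleC_minus_one mult_minus1)

lemma cinner_minus_left: "cinner (- (x::'a::complex_inner)) y = - cinner x y"
  by (metis cinner_scaleC_left scaleC_minus_one mult_minus1 complex_cnj_minus complex_cnj_one)

lemma cinner_diff_right: "cinner (x::'a::complex_inner) (y - z) = cinner x y - cinner x z"
  by (metis diff_conv_add_uminus cinner_add_right cinner_minus_right)

lemma cinner_diff_left: "cinner ((x::'a::complex_inner) - y) z = cinner x z - cinner y z"
  by (metis diff_conv_add_uminus cinner_add_left cinner_minus_left)

lemma cinner_sum_left:
  "finite F \<Longrightarrow> cinner (\<Sum>v\<in>F. f v) (y::'a::complex_inner) = (\<Sum>v\<in>F. cinner (f v) y)"
  by (induction F rule: finite_induct) (auto simp: cinner_add_left)

lemma cinner_self_eq_zero_iff: "cinner (x::'a::complex_inner) x = 0 \<longleftrightarrow> x = 0"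
  by (simp add: cinner_self_norm)

lemma Re_cinner_self: "Re (cinner (x::'a::complex_inner) x) = (norm x)\<^sup>2"
  by (simp add: cinner_self_norm)

lemma cinner_eq_zero_commute: "cinner (x::'a::complex_inner) y = 0 \<longleftrightarrow> cinner y x = 0"
  by (metis cinner_conj complex_cnj_zero)

lemma cinner_diff_eq_zero_iff: "cinner (z::'a::complex_inner) (x - y) = 0 \<longleftrightarrow> cinner x z = cinner y z"
  by (simp add: cinner_eq_zero_commute[of z] cinner_diff_left)

lemma power2_norm_add:
  "(norm ((x::'a::complex_inner) + y))\<^sup>2 = (norm x)\<^sup>2 + (norm y)\<^sup>2 + 2 * Re (cinner x y)"
proof -
  have "cinner (x+y) (x+y) = cinner x x + cinner y y + (cinner x y + cnj (cinner x y))"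
    by (simp add: cinner_add_left cinner_add_right cinner_conj[of y x])
  hence "Re (cinner (x+y) (x+y)) = Re (cinner x x) + Re (cinner y y) + 2 * Re (cinner x y)"
    by simp
  thus ?thesis by (simp add: Re_cinner_self)
qed

lemma parallelogram_law:
  "(norm ((a::'a::complex_inner) + b))\<^sup>2 + (norm (a - b))\<^sup>2 = 2 * (norm a)\<^sup>2 + 2 * (norm b)\<^sup>2"
proof -
  have "(norm (a - b))\<^sup>2 = (norm (a + - b))\<^sup>2" by simp
  also have "\<dots> = (norm a)\<^sup>2 + (norm b)\<^sup>2 + 2 * Re (cinner a (- b))"
    by (simp only: power2_norm_add norm_minus_cancel)
  finally show ?thesis by (simp add: power2_norm_add cinner_minus_right)
qed

lemma norm_scaleC: "norm (scaleC c (x::'a::complex_inner)) = cmod c * norm x"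
proof -
  have cc: "cnj c * c = complex_of_real ((cmod c)\<^sup>2)"
    by (subst complex_norm_square) (simp add: mult.commute)
  have "cinner (scaleC c x) (scaleC c x) = (cnj c * c) * cinner x x"
    by (simp add: cinner_scaleC_left cinner_scaleC_right)
  also have "\<dots> = complex_of_real ((cmod c * norm x)\<^sup>2)"
    by (simp only: cc cinner_self_norm of_real_mult[symmetric] power_mult_distrib)
  finally have "(norm (scaleC c x))\<^sup>2 = (cmod c * norm x)\<^sup>2"
    using Re_cinner_self[of "scaleC c x"] by simp
  thus ?thesis by (rule power2_eq_imp_eq) simp_all
qed

text \<open>Pythagoras for the component of \<open>y\<close> orthogonal to \<open>x\<close>.\<close>
lemma power2_norm_diff_orthogonal_component:
  assumes "(x::'a::complex_inner) \<noteq> 0"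
  shows "(norm (y - scaleC (cinner x y / complex_of_real ((norm x)\<^sup>2)) x))\<^sup>2
       = (norm y)\<^sup>2 - (cmod (cinner x y))\<^sup>2 / (norm x)\<^sup>2"
proof -
  define c where "c = cinner x y / complex_of_real ((norm x)\<^sup>2)"
  have nx: "(norm x)\<^sup>2 > 0" using assms by simp
  have "(norm (y - scaleC c x))\<^sup>2 = (norm (y + - scaleC c x))\<^sup>2" by simp
  also have "\<dots> = (norm y)\<^sup>2 + (cmod c * norm x)\<^sup>2 + 2 * Re (cinner y (- scaleC c x))"
    by (simp only: power2_norm_add norm_minus_cancel norm_scaleC)
  also have "Re (cinner y (- scaleC c x)) = - Re (c * cinner y x)"
    by (simp add: cinner_minus_right cinner_scaleC_right)
  also have "c * cinner y x = complex_of_real ((cmod (cinner x y))\<^sup>2 / (norm x)\<^sup>2)"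
  proof -
    have "c * cinner y x = cinner x y * cnj (cinner x y) / complex_of_real ((norm x)\<^sup>2)"
      unfolding c_def by (simp add: cinner_conj[of y x])
    also have "cinner x y * cnj (cinner x y) = complex_of_real ((cmod (cinner x y))\<^sup>2)"
      by (rule complex_norm_square[symmetric])
    finally show ?thesis by simp
  qed
  also have "(cmod c * norm x)\<^sup>2 = (cmod (cinner x y))\<^sup>2 / (norm x)\<^sup>2"
  proof -
    have "cmod c = cmod (cinner x y) / (norm x)\<^sup>2"
      unfolding c_def by (simp add: norm_divide norm_power)
    thus ?thesis using nx by (simp add: power_divide field_simps power2_eq_square)
  qed
  finally show ?thesis unfolding c_def by (simp add: algebra_simps)
qed

lemma norm_cinner_le: "cmod (cinner (x::'a::complex_inner) y) \<le> norm x * norm y"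
proof (cases "x = 0")
  case True thus ?thesis by simp
next
  case False
  hence nx: "(norm x)\<^sup>2 > 0" by simp
  from power2_norm_diff_orthogonal_component[OF False, of y]
  have "0 \<le> (norm y)\<^sup>2 - (cmod (cinner x y))\<^sup>2 / (norm x)\<^sup>2"
    by (metis zero_le_power2)
  hence "(cmod (cinner x y))\<^sup>2 \<le> (norm x * norm y)\<^sup>2" using nx
    by (simp add: field_simps power_mult_distrib)
  thus ?thesis by (rule power2_le_imp_le) simp
qed

lemma csubspace_zero: "csubspace M \<Longrightarrow> 0 \<in> M"
  unfolding csubspace_def by blast

lemma csubspace_add: "csubspace M \<Longrightarrow> x \<in> M \<Longrightarrow> y \<in> M \<Longrightarrow> x + y \<in> M"
  unfolding csubspace_def by blast

lemma csubspace_scaleC: "csubspace M \<Longrightarrow> x \<in> M \<Longrightarrow> scaleC c x \<in> M"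
  unfolding csubspace_def by blast

lemma csubspace_scaleR: "csubspace M \<Longrightarrow> x \<in> M \<Longrightarrow> scaleR r x \<in> M"
  unfolding csubspace_def by (simp add: scaleR_scaleC)

lemma csubspace_diff: "csubspace M \<Longrightarrow> x \<in> M \<Longrightarrow> y \<in> M \<Longrightarrow> x - y \<in> M"
  unfolding csubspace_def by (metis diff_conv_add_uminus scaleC_minus_one)

lemma csubspace_UNIV: "csubspace (UNIV::'a::complex_inner set)"
  unfolding csubspace_def by simp

lemma closed_csubspace_UNIV: "closed_csubspace (UNIV::'a::complex_inner set)"
  unfolding closed_csubspace_def by (simp add: csubspace_UNIV)

lemma closed_kernel_bounded_functional:
  fixes f :: "'a::complex_inner \<Rightarrow> complex"
  assumes M: "closed_csubspace M"
    and add: "\<forall>x\<in>M. \<forall>y\<in>M. f (x + y) = f x + f y"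
    and bnd: "\<forall>x\<in>M. cmod (f x) \<le> C * norm x"
  shows "closed {x\<in>M. f x = 0}"
  unfolding closed_sequential_limits
proof (intro allI impI, elim conjE)
  have sub: "csubspace M" and cl: "closed M" using M unfolding closed_csubspace_def by auto
  fix s l assume sK: "\<forall>n. s n \<in> {x\<in>M. f x = 0}" and lim: "s \<longlonglongrightarrow> l"
  have lM: "l \<in> M" using closed_sequentially[OF cl] sK lim by blast
  have "cmod (f l) \<le> C * norm (l - s n)" for n
  proof -
    have "f l = f (l - s n) + f (s n)"
      using add csubspace_diff[OF sub lM, of "s n"] sK by (metis (lifting) diff_add_cancel mem_Collect_eq)
    thus ?thesis using bnd csubspace_diff[OF sub lM, of "s n"] sK by auto
  qed
  moreover have "(\<lambda>n. C * norm (l - s n)) \<longlonglongrightarrow> C * norm (l - l)" by (intro tendsto_intros lim)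
  ultimately have "cmod (f l) \<le> C * norm (l - l)" by (intro LIMSEQ_le_const) auto
  thus "l \<in> {x\<in>M. f x = 0}" using lM by simp
qed

lemma eq_zero_if_orthogonal_dense_span:
  fixes D :: "'a::complex_inner"
  assumes dense: "closure (cspan G) = UNIV" and orth: "\<forall>X\<in>G. cinner X D = 0"
  shows "D = 0"
proof -
  let ?Z = "{x\<in>UNIV. cinner D x = 0}"
  have "closed ?Z"
    by (rule closed_kernel_bounded_functional[OF closed_csubspace_UNIV, where C = "norm D"])
       (simp_all add: cinner_add_right norm_cinner_le)
  moreover have "cspan G \<subseteq> ?Z"
  proof
    fix x assume "x \<in> cspan G"
    then obtain F c where F: "finite F" "F \<subseteq> G" and x: "x = (\<Sum>v\<in>F. scaleC (c v) v)"
      unfolding cspan_def by blast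
    have "cinner x D = (\<Sum>v\<in>F. cnj (c v) * cinner v D)"
      unfolding x by (simp add: cinner_sum_left[OF F(1)] cinner_scaleC_left)
    also have "\<dots> = 0" using F orth by (intro sum.neutral) auto
    finally show "x \<in> ?Z" by (simp add: cinner_eq_zero_commute)
  qed
  ultimately have "closure (cspan G) \<subseteq> ?Z" by (rule closure_minimal[rotated])
  hence "cinner D D = 0" using dense by blast
  thus ?thesis by (simp add: cinner_self_eq_zero_iff)
qed

section \<open>Orthogonal projection\<close>

lemma closest_point_orthogonal:
  assumes K: "csubspace K" and yK: "y \<in> K"
    and best: "\<forall>z\<in>K. norm (x - y) \<le> norm (x - z)" and zK: "z \<in> K"
  shows "cinner z (x - y) = 0"
proof (cases "z = 0")
  case True thus ?thesis by simp
next
  case False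
  define c where "c = cinner z (x - y) / complex_of_real ((norm z)\<^sup>2)"
  have "y + scaleC c z \<in> K" by (intro csubspace_add csubspace_scaleC K yK zK)
  hence "norm (x - y) \<le> norm (x - (y + scaleC c z))" using best by blast
  also have "x - (y + scaleC c z) = (x - y) - scaleC c z" by simp
  finally have "(norm (x - y))\<^sup>2 \<le> (norm ((x - y) - scaleC c z))\<^sup>2" by (simp add: power_mono)
  also have "\<dots> = (norm (x - y))\<^sup>2 - (cmod (cinner z (x - y)))\<^sup>2 / (norm z)\<^sup>2"
    unfolding c_def by (rule power2_norm_diff_orthogonal_component[OF False])
  finally have "(cmod (cinner z (x - y)))\<^sup>2 / (norm z)\<^sup>2 \<le> 0" by simp
  moreover have "(norm z)\<^sup>2 > 0" using False by simp
  ultimately have "(cmod (cinner z (x - y)))\<^sup>2 \<le> 0" by (simp add: divide_le_0_iff)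
  thus ?thesis by simp
qed

text \<open>The parallelogram law applied to \<open>x - m\<^sub>k\<close> and \<open>x - m\<^sub>n\<close>, whose half-sum is
\<open>x\<close> minus a point of \<open>K\<close>, bounds \<open>\<parallel>m\<^sub>n - m\<^sub>k\<parallel>\<^sup>2\<close> by \<open>2/(n+1) + 2/(k+1)\<close>.\<close>
lemma Cauchy_minimizing_sequence:
  fixes x :: "'a::complex_inner"
  assumes K: "csubspace K" and mK: "\<And>n. m n \<in> K"
    and dle: "\<And>z. z \<in> K \<Longrightarrow> d \<le> norm (x - z)" and d0: "0 \<le> d"
    and mb: "\<And>n. (norm (x - m n))\<^sup>2 < d\<^sup>2 + 1 / real (Suc n)"
  shows "Cauchy m"
proof -
  have bound: "(norm (m n - m k))\<^sup>2 \<le> 2 / real (Suc n) + 2 / real (Suc k)" for n k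
  proof -
    define a where "a = x - m k"
    define b where "b = x - m n"
    have mid: "scaleR (1/2) (m n + m k) \<in> K" by (intro csubspace_scaleR csubspace_add K mK)
    have "a + b = scaleR 2 (x - scaleR (1/2) (m n + m k))"
      unfolding a_def b_def by (simp add: algebra_simps scaleR_2)
    hence "2 * d \<le> norm (a + b)" using dle[OF mid] by simp
    hence "(2 * d)\<^sup>2 \<le> (norm (a + b))\<^sup>2" using d0 by (intro power_mono) auto
    moreover have "(norm a)\<^sup>2 < d\<^sup>2 + 1 / real (Suc k)" "(norm b)\<^sup>2 < d\<^sup>2 + 1 / real (Suc n)"
      unfolding a_def b_def using mb by auto
    moreover have "a - b = m n - m k" unfolding a_def b_def by simp
    ultimately show ?thesis using parallelogram_law[of a b] by (simp add: power_mult_distrib)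
  qed
  show ?thesis
  proof (rule CauchyI)
    fix e :: real assume e: "0 < e"
    obtain N where N: "inverse (real (Suc N)) < e\<^sup>2 / 4"
      using reals_Archimedean[of "e\<^sup>2/4"] e by auto
    show "\<exists>M. \<forall>p\<ge>M. \<forall>q\<ge>M. norm (m p - m q) < e"
    proof (intro exI allI impI)
      fix p q assume p: "N \<le> p" and q: "N \<le> q"
      have "2 / real (Suc p) \<le> 2 / real (Suc N)" "2 / real (Suc q) \<le> 2 / real (Suc N)"
        using p q by (simp_all add: frac_le)
      moreover have "4 / real (Suc N) < e\<^sup>2" using N by (simp add: field_simps)
      ultimately have "(norm (m p - m q))\<^sup>2 < e\<^sup>2" using bound[of p q] by linarith
      thus "norm (m p - m q) < e" using e by (simp add: power_less_imp_less_base)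
    qed
  qed
qed

lemma closest_point_exists:
  fixes x :: "'a::chilbert"
  assumes "closed_csubspace K"
  shows "\<exists>y\<in>K. \<forall>z\<in>K. norm (x - y) \<le> norm (x - z)"
proof -
  have K: "csubspace K" and cl: "closed K" using assms unfolding closed_csubspace_def by auto
  define D where "D = {norm (x - m) | m. m \<in> K}"
  define d where "d = Inf D"
  have Dne: "D \<noteq> {}" using csubspace_zero[OF K] unfolding D_def by blast
  have bdd: "bdd_below D" unfolding D_def by (rule bdd_belowI[of _ 0]) auto
  have dle: "\<And>z. z \<in> K \<Longrightarrow> d \<le> norm (x - z)"
    using bdd unfolding d_def D_def by (auto intro!: cInf_lower)
  have d0: "0 \<le> d" unfolding d_def using Dne by (rule cInf_greatest) (auto simp: D_def)
  have "\<exists>m\<in>K. (norm (x - m))\<^sup>2 < d\<^sup>2 + 1 / real (Suc n)" for n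
  proof -
    have "d < sqrt (d\<^sup>2 + 1 / real (Suc n))"
      using real_sqrt_less_mono[of "d\<^sup>2" "d\<^sup>2 + 1 / real (Suc n)"] d0 by simp
    then obtain m where m: "m \<in> K" "norm (x - m) < sqrt (d\<^sup>2 + 1 / real (Suc n))"
      using Dne bdd unfolding d_def by (auto simp: cInf_less_iff D_def)
    have "(norm (x - m))\<^sup>2 < (sqrt (d\<^sup>2 + 1 / real (Suc n)))\<^sup>2"
      using m(2) by (intro power_strict_mono) auto
    thus ?thesis using m(1) by auto
  qed
  then obtain m where mK: "\<And>n. m n \<in> K"
    and mb: "\<And>n. (norm (x - m n))\<^sup>2 < d\<^sup>2 + 1 / real (Suc n)"
    by metis
  obtain y where lim: "m \<longlonglongrightarrow> y"
    using Cauchy_minimizing_sequence[OF K mK dle d0 mb] Cauchy_convergent_iff convergent_def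
    by blast
  have yK: "y \<in> K" using closed_sequentially[OF cl] mK lim by blast
  have "(\<lambda>n. (norm (x - m n))\<^sup>2) \<longlonglongrightarrow> (norm (x - y))\<^sup>2" by (intro tendsto_intros lim)
  moreover have "(\<lambda>n. d\<^sup>2 + 1 / real (Suc n)) \<longlonglongrightarrow> d\<^sup>2 + 0"
    by (intro tendsto_intros) (use LIMSEQ_inverse_real_of_nat in \<open>simp add: inverse_eq_divide\<close>)
  ultimately have "(norm (x - y))\<^sup>2 \<le> d\<^sup>2 + 0"
    by (rule LIMSEQ_le) (use mb less_imp_le in blast)
  hence "norm (x - y) \<le> d" using power2_le_imp_le[OF _ d0] by simp
  thus ?thesis using yK dle by force
qed

lemma proj_on_eqI:
  assumes K: "csubspace K" and yK: "y \<in> K" and eq: "\<forall>z\<in>K. cinner x z = cinner y z"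
  shows "proj_on K x = y"
  unfolding proj_on_def
proof (rule the_equality)
  show "y \<in> K \<and> (\<forall>z\<in>K. cinner z (x - y) = 0)"
    using yK eq by (simp add: cinner_diff_eq_zero_iff)
next
  fix y' assume y': "y' \<in> K \<and> (\<forall>z\<in>K. cinner z (x - y') = 0)"
  have d: "y' - y \<in> K" using csubspace_diff[OF K] y' yK by blast
  have "cinner y' (y' - y) = cinner x (y' - y)" using y' d by (simp add: cinner_diff_eq_zero_iff)
  also have "\<dots> = cinner y (y' - y)" using eq d by blast
  finally have "cinner (y' - y) (y' - y) = 0" by (simp add: cinner_diff_left)
  thus "y' = y" by (simp add: cinner_self_eq_zero_iff)
qed

lemma
  fixes x :: "'a::chilbert"
  assumes "closed_csubspace K"
  shows proj_on_mem: "proj_on K x \<in> K"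
    and cinner_proj_on_left: "z \<in> K \<Longrightarrow> cinner (proj_on K x) z = cinner x z"
proof -
  have K: "csubspace K" using assms unfolding closed_csubspace_def by auto
  obtain y where yK: "y \<in> K" and best: "\<forall>z\<in>K. norm (x - y) \<le> norm (x - z)"
    using closest_point_exists[OF assms] by blast
  have eq: "\<forall>z\<in>K. cinner x z = cinner y z"
    using closest_point_orthogonal[OF K yK best] by (simp add: cinner_diff_eq_zero_iff)
  have "proj_on K x = y" by (rule proj_on_eqI[OF K yK eq])
  thus "proj_on K x \<in> K" "z \<in> K \<Longrightarrow> cinner (proj_on K x) z = cinner x z"
    using yK eq by auto
qed

section \<open>Riesz representation and adjoints\<close>

text \<open>A vector \<open>w\<close> orthogonal to the kernel of \<open>f\<close> with \<open>f w \<noteq> 0\<close> represents \<open>f\<close>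
after rescaling, because \<open>x - (f x / f w) w\<close> lies in the kernel.\<close>
lemma representing_vector_of_orthogonal_kernel:
  fixes f :: "'a::complex_inner \<Rightarrow> complex"
  assumes M: "csubspace M"
    and add: "\<forall>x\<in>M. \<forall>y\<in>M. f (x + y) = f x + f y"
    and scal: "\<forall>c. \<forall>x\<in>M. f (scaleC c x) = c * f x"
    and wM: "w \<in> M" and fw: "f w \<noteq> 0" and orth: "\<forall>k\<in>M. f k = 0 \<longrightarrow> cinner k w = 0"
    and xM: "x \<in> M"
  shows "f x = cinner (scaleC (cnj (f w) / complex_of_real ((norm w)\<^sup>2)) w) x"
proof -
  define k where "k = x - scaleC (f x / f w) w"
  have wx: "scaleC (f x / f w) w \<in> M" using csubspace_scaleC[OF M wM] .
  have kM: "k \<in> M" unfolding k_def using csubspace_diff[OF M xM wx] .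
  have "f x = f k + f (scaleC (f x / f w) w)"
    using add kM wx unfolding k_def by (metis diff_add_cancel)
  hence "f k = 0" using scal wM fw by simp
  hence "cinner k w = 0" using orth kM by blast
  hence "cinner x w = cnj (f x / f w) * cinner w w"
    unfolding k_def by (simp add: cinner_diff_left cinner_scaleC_left)
  hence "cinner w x = (f x / f w) * complex_of_real ((norm w)\<^sup>2)"
    by (metis cinner_conj cinner_self_norm complex_cnj_cnj complex_cnj_complex_of_real complex_cnj_mult)
  moreover have "w \<noteq> 0" using fw scal wM by (metis mult_zero_left scaleC_zero_left)
  ultimately show ?thesis using fw by (simp add: cinner_scaleC_left field_simps)
qed

lemma riesz_representation:
  fixes f :: "'a::chilbert \<Rightarrow> complex"
  assumes M: "closed_csubspace M"
    and add: "\<forall>x\<in>M. \<forall>y\<in>M. f (x + y) = f x + f y"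
    and scal: "\<forall>c. \<forall>x\<in>M. f (scaleC c x) = c * f x"
    and bnd: "\<forall>x\<in>M. cmod (f x) \<le> C * norm x"
  shows "\<exists>z\<in>M. \<forall>x\<in>M. f x = cinner z x"
proof (cases "\<forall>x\<in>M. f x = 0")
  case True
  have "0 \<in> M" using M unfolding closed_csubspace_def by (simp add: csubspace_zero)
  thus ?thesis using True by (intro bexI[of _ 0]) auto
next
  case False
  then obtain u where uM: "u \<in> M" and fu: "f u \<noteq> 0" by blast
  have sub: "csubspace M" using M unfolding closed_csubspace_def by auto
  have f0: "f 0 = 0" using scal csubspace_zero[OF sub] by (metis mult_zero_left scaleC_zero_left)
  define K where "K = {x\<in>M. f x = 0}"
  have "csubspace K" unfolding csubspace_def K_def
    using f0 csubspace_zero[OF sub] csubspace_add[OF sub] csubspace_scaleC[OF sub] add scal by auto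
  hence K: "closed_csubspace K"
    unfolding closed_csubspace_def K_def using closed_kernel_bounded_functional[OF M add bnd] by simp
  define w where "w = u - proj_on K u"
  have pK: "proj_on K u \<in> M" "f (proj_on K u) = 0" using proj_on_mem[OF K] unfolding K_def by auto
  have wM: "w \<in> M" unfolding w_def using csubspace_diff[OF sub uM pK(1)] .
  have "f u = f w + f (proj_on K u)" using add wM pK(1) unfolding w_def by (metis diff_add_cancel)
  hence fw: "f w \<noteq> 0" using fu pK(2) by simp
  have "\<forall>k\<in>M. f k = 0 \<longrightarrow> cinner k w = 0"
    using cinner_proj_on_left[OF K] unfolding w_def K_def by (auto simp: cinner_diff_eq_zero_iff)
  thus ?thesis
    using representing_vector_of_orthogonal_kernel[OF sub add scal wM fw] csubspace_scaleC[OF sub wM]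
    by blast
qed

lemma adj_on_eqI:
  assumes M: "csubspace M" and zM: "z \<in> M" and z: "\<forall>x\<in>M. cinner (T x) y = cinner x z"
  shows "adj_on M T y = z"
  unfolding adj_on_def
proof (rule the_equality)
  show "z \<in> M \<and> (\<forall>x\<in>M. cinner (T x) y = cinner x z)" using zM z by blast
next
  fix z' assume z': "z' \<in> M \<and> (\<forall>x\<in>M. cinner (T x) y = cinner x z')"
  have d: "z' - z \<in> M" using csubspace_diff[OF M] z' zM by blast
  hence "cinner (z' - z) (z' - z) = 0" using z z' by (simp add: cinner_diff_right)
  thus "z' = z" by (simp add: cinner_self_eq_zero_iff)
qed

lemma
  fixes T :: "'a::chilbert \<Rightarrow> 'a"
  assumes M: "closed_csubspace M" and T: "bounded_op_on M T" and yM: "y \<in> M"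
  shows adj_on_mem: "adj_on M T y \<in> M"
    and cinner_adj_on: "x \<in> M \<Longrightarrow> cinner (T x) y = cinner x (adj_on M T y)"
proof -
  obtain C where C: "\<forall>x\<in>M. norm (T x) \<le> C * norm x" using T unfolding bounded_op_on_def by blast
  have "\<exists>z\<in>M. \<forall>x\<in>M. cinner y (T x) = cinner z x"
  proof (rule riesz_representation[OF M, where C = "norm y * C"])
    show "\<forall>x\<in>M. \<forall>x'\<in>M. cinner y (T (x + x')) = cinner y (T x) + cinner y (T x')"
      "\<forall>c. \<forall>x\<in>M. cinner y (T (scaleC c x)) = c * cinner y (T x)"
      using T unfolding bounded_op_on_def by (simp_all add: cinner_add_right cinner_scaleC_right)
    show "\<forall>x\<in>M. cmod (cinner y (T x)) \<le> norm y * C * norm x"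
      using C norm_cinner_le order_trans mult_left_mono norm_ge_zero
      by (metis mult.assoc)
  qed
  then obtain z where zM: "z \<in> M" and z: "\<forall>x\<in>M. cinner (T x) y = cinner x z"
    by (metis cinner_conj)
  have "adj_on M T y = z"
    using adj_on_eqI[OF _ zM z] M unfolding closed_csubspace_def by blast
  thus "adj_on M T y \<in> M" "x \<in> M \<Longrightarrow> cinner (T x) y = cinner x (adj_on M T y)"
    using zM z by auto
qed

lemma bounded_op_on_adj_on_UNIV:
  assumes T: "bounded_op_on UNIV (T::'a::chilbert \<Rightarrow> 'a)"
  shows "bounded_op_on UNIV (adj_on UNIV T)"
proof -
  define A where "A = adj_on UNIV T"
  have adj: "cinner (T x) y = cinner x (A y)" for x y
    unfolding A_def by (rule cinner_adj_on[OF closed_csubspace_UNIV T]) simp_all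
  have "A (x + y) = A x + A y" for x y
    unfolding A_def by (rule adj_on_eqI[OF csubspace_UNIV]) (simp_all add: adj[unfolded A_def] cinner_add_right)
  moreover have "A (scaleC c x) = scaleC c (A x)" for c x
    unfolding A_def by (rule adj_on_eqI[OF csubspace_UNIV]) (simp_all add: adj[unfolded A_def] cinner_scaleC_right)
  moreover obtain C where C: "\<forall>x. norm (T x) \<le> C * norm x" using T unfolding bounded_op_on_def by auto
  have "norm (A y) \<le> max C 0 * norm y" for y
  proof (cases "A y = 0")
    case True thus ?thesis by simp
  next
    case False
    have "(norm (A y))\<^sup>2 = Re (cinner (T (A y)) y)" by (simp add: adj Re_cinner_self)
    also have "\<dots> \<le> norm (T (A y)) * norm y" using complex_Re_le_cmod norm_cinner_le order_trans by blast
    also have "\<dots> \<le> max C 0 * norm (A y) * norm y"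
      using C by (intro mult_right_mono) (auto intro: order_trans[OF _ mult_right_mono])
    finally have "norm (A y) * norm (A y) \<le> (max C 0 * norm y) * norm (A y)"
      by (simp add: power2_eq_square algebra_simps)
    thus ?thesis using False by simp
  qed
  ultimately show ?thesis unfolding bounded_op_on_def A_def[symmetric] by blast
qed

lemma adj_on_adj_on_UNIV:
  assumes T: "bounded_op_on UNIV (T::'a::chilbert \<Rightarrow> 'a)"
  shows "adj_on UNIV (adj_on UNIV T) = T"
proof
  fix y
  have "cinner (adj_on UNIV T x) y = cinner x (T y)" for x
    using cinner_adj_on[OF closed_csubspace_UNIV T, of x y] by (metis UNIV_I cinner_conj)
  thus "adj_on UNIV (adj_on UNIV T) y = T y" by (intro adj_on_eqI[OF csubspace_UNIV]) simp_all
qed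

section \<open>Commuting triples\<close>

lemma commute_on_UNIV_of_intertwining:
  assumes J: "inj J" and A: "\<forall>x. A' (J x) = J (A x)" and B: "\<forall>x. B' (J x) = J (B x)"
    and AB': "commute_on UNIV A' B'"
  shows "commute_on UNIV A B"
  unfolding commute_on_def
proof
  fix x
  have "J (A (B x)) = A' (B' (J x))" using A B by simp
  also have "\<dots> = B' (A' (J x))" using AB' unfolding commute_on_def by simp
  also have "\<dots> = J (B (A x))" using A B by simp
  finally show "A (B x) = B (A x)" by (rule injD[OF J])
qed

lemma gamma3_isometry_commute:
  fixes N :: "'n::chilbert itself"
  assumes "gamma3_isometry N (UNIV::'a::complex_inner set) T1 T2 V"
  shows "commute_on UNIV T1 T2" "commute_on UNIV T1 V" "commute_on UNIV T2 V"
proof -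
  obtain J :: "'a \<Rightarrow> 'n" and U1 U2 W where
    U: "gamma3_unitary UNIV U1 U2 W" and
    J_add: "\<forall>x y. J (x + y) = J x + J y" and
    J_cinner: "\<forall>x y. cinner (J x) (J y) = cinner x y" and
    J_intertwines: "\<forall>x. U1 (J x) = J (T1 x) \<and> U2 (J x) = J (T2 x) \<and> W (J x) = J (V x)"
    using assms unfolding gamma3_isometry_def by auto
  have "inj J"
  proof (rule injI)
    fix x y assume eq: "J x = J y"
    have "J x = J (x - y) + J y" using J_add by (metis diff_add_cancel)
    hence "J (x - y) = 0" using eq by simp
    hence "cinner (x - y) (x - y) = 0" using J_cinner by (metis cinner_zero_left)
    thus "x = y" by (simp add: cinner_self_eq_zero_iff)
  qed
  moreover have "commute_on UNIV U1 U2" "commute_on UNIV U1 W" "commute_on UNIV U2 W"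
    using U unfolding gamma3_unitary_def by auto
  ultimately show "commute_on UNIV T1 T2" "commute_on UNIV T1 V" "commute_on UNIV T2 V"
    using J_intertwines by (auto intro: commute_on_UNIV_of_intertwining)
qed

lemma gamma3_coisometry_adj_on_UNIV:
  assumes "gamma3_isometry N (UNIV::'a::chilbert set) T1 T2 V"
  shows "gamma3_coisometry N UNIV (adj_on UNIV T1) (adj_on UNIV T2) (adj_on UNIV V)"
proof -
  have "bounded_op_on UNIV T1" "bounded_op_on UNIV T2" "bounded_op_on UNIV V"
    using assms unfolding gamma3_isometry_def by auto
  thus ?thesis using assms
    by (simp add: gamma3_coisometry_def bounded_op_on_adj_on_UNIV adj_on_adj_on_UNIV)
qed

definition triple_pow :: "('a \<Rightarrow> 'a) \<Rightarrow> ('a \<Rightarrow> 'a) \<Rightarrow> ('a \<Rightarrow> 'a) \<Rightarrow> nat \<Rightarrow> nat \<Rightarrow> nat \<Rightarrow> 'a \<Rightarrow> 'a"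
  where "triple_pow A B C i j k x = (A ^^ i) ((B ^^ j) ((C ^^ k) x))"

lemma funpow_mem: "\<forall>x\<in>M. A x \<in> M \<Longrightarrow> x \<in> M \<Longrightarrow> (A ^^ n) x \<in> M"
  by (induction n) auto

lemma funpow_commute_on:
  assumes "commute_on M A B" "\<forall>x\<in>M. B x \<in> M" "x \<in> M"
  shows "A ((B ^^ n) x) = (B ^^ n) (A x)"
  using assms funpow_mem[OF assms(2,3)] unfolding commute_on_def by (induction n) auto

lemma
  assumes A: "\<forall>x\<in>M. A x \<in> M" and B: "\<forall>x\<in>M. B x \<in> M" and C: "\<forall>x\<in>M. C x \<in> M"
    and AB: "commute_on M A B" and AC: "commute_on M A C" and BC: "commute_on M B C"
    and x: "x \<in> M"
  shows triple_pow_Suc1: "A (triple_pow A B C i j k x) = triple_pow A B C (Suc i) j k x"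
    and triple_pow_Suc2: "B (triple_pow A B C i j k x) = triple_pow A B C i (Suc j) k x"
    and triple_pow_Suc3: "C (triple_pow A B C i j k x) = triple_pow A B C i j (Suc k) x"
proof -
  have Ck: "(C ^^ k) x \<in> M" using funpow_mem[OF C x] .
  have BCk: "(B ^^ j) ((C ^^ k) x) \<in> M" using funpow_mem[OF B Ck] .
  show "A (triple_pow A B C i j k x) = triple_pow A B C (Suc i) j k x"
    unfolding triple_pow_def by simp
  have BA: "commute_on M B A" and CA: "commute_on M C A" and CB: "commute_on M C B"
    using AB AC BC unfolding commute_on_def by auto
  show "B (triple_pow A B C i j k x) = triple_pow A B C i (Suc j) k x"
    unfolding triple_pow_def using funpow_commute_on[OF BA A BCk] by simp
  show "C (triple_pow A B C i j k x) = triple_pow A B C i j (Suc k) x"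
    unfolding triple_pow_def
    using funpow_commute_on[OF CA A BCk] funpow_commute_on[OF CB B Ck] by simp
qed

section \<open>Compressions\<close>

lemma proj_on_comp_eq_of_adj_on_eq:
  fixes T :: "'a::chilbert \<Rightarrow> 'a"
  assumes H: "closed_csubspace H" and T: "bounded_op_on UNIV T" and S: "bounded_op_on H S"
    and adj_eq: "\<forall>h\<in>H. adj_on UNIV T h = adj_on H S h"
  shows "proj_on H (T x) = S (proj_on H x)"
proof (rule proj_on_eqI)
  show "csubspace H" using H unfolding closed_csubspace_def by simp
  show "S (proj_on H x) \<in> H" using S proj_on_mem[OF H] unfolding bounded_op_on_def by blast
  show "\<forall>k\<in>H. cinner (T x) k = cinner (S (proj_on H x)) k"
  proof
    fix k assume k: "k \<in> H"
    have "cinner (T x) k = cinner x (adj_on H S k)"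
      using cinner_adj_on[OF closed_csubspace_UNIV T] adj_eq k by simp
    also have "\<dots> = cinner (proj_on H x) (adj_on H S k)"
      using cinner_proj_on_left[OF H adj_on_mem[OF H S k]] by simp
    also have "\<dots> = cinner (S (proj_on H x)) k"
      using cinner_adj_on[OF H S k proj_on_mem[OF H]] by simp
    finally show "cinner (T x) k = cinner (S (proj_on H x)) k" .
  qed
qed

lemma proj_on_funpow_eq_of_adj_on_eq:
  fixes T :: "'a::chilbert \<Rightarrow> 'a"
  assumes "closed_csubspace H" "bounded_op_on UNIV T" "bounded_op_on H S"
    "\<forall>h\<in>H. adj_on UNIV T h = adj_on H S h"
  shows "proj_on H ((T ^^ n) x) = (S ^^ n) (proj_on H x)"
  by (induction n) (simp_all add: proj_on_comp_eq_of_adj_on_eq[OF assms])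

lemma proj_on_self:
  fixes h :: "'a::chilbert"
  shows "closed_csubspace H \<Longrightarrow> h \<in> H \<Longrightarrow> proj_on H h = h"
  unfolding closed_csubspace_def by (simp add: proj_on_eqI)

lemma adj_on_eq_of_dense_compression:
  fixes T :: "'a::chilbert \<Rightarrow> 'a"
  assumes H: "closed_csubspace H" and T: "bounded_op_on UNIV T" and S: "bounded_op_on H S"
    and dense: "closure (cspan G) = UNIV"
    and compression: "\<forall>X\<in>G. proj_on H (T X) = S (proj_on H X)"
    and h: "h \<in> H"
  shows "adj_on UNIV T h = adj_on H S h"
proof -
  have "cinner X (adj_on UNIV T h) = cinner X (adj_on H S h)" if X: "X \<in> G" for X
  proof -
    have "cinner X (adj_on UNIV T h) = cinner (T X) h"
      using cinner_adj_on[OF closed_csubspace_UNIV T] by simp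
    also have "\<dots> = cinner (S (proj_on H X)) h"
      using cinner_proj_on_left[OF H h] compression X by metis
    also have "\<dots> = cinner (proj_on H X) (adj_on H S h)"
      using cinner_adj_on[OF H S h proj_on_mem[OF H]] .
    also have "\<dots> = cinner X (adj_on H S h)"
      using cinner_proj_on_left[OF H adj_on_mem[OF H S h]] .
    finally show ?thesis .
  qed
  hence "adj_on UNIV T h - adj_on H S h = 0"
    by (intro eq_zero_if_orthogonal_dense_span[OF dense]) (simp add: cinner_diff_right)
  thus ?thesis by simp
qed

section \<open>Dilations and co-isometric extensions\<close>

lemma isometric_dilation_of_adj_on_eq:
  fixes H :: "'a::chilbert set"
  assumes H: "closed_csubspace H"
    and S1: "bounded_op_on H S1" and S2: "bounded_op_on H S2" and P: "bounded_op_on H P"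
    and iso: "gamma3_isometry N UNIV T1 T2 V"
    and T1_S1: "\<forall>h\<in>H. adj_on UNIV T1 h = adj_on H S1 h"
    and T2_S2: "\<forall>h\<in>H. adj_on UNIV T2 h = adj_on H S2 h"
    and V_P: "\<forall>h\<in>H. adj_on UNIV V h = adj_on H P h"
  shows "gamma3_isometric_dilation N H S1 S2 P T1 T2 V"
proof -
  have T1: "bounded_op_on UNIV T1" and T2: "bounded_op_on UNIV T2" and V: "bounded_op_on UNIV V"
    using iso unfolding gamma3_isometry_def by auto
  have "proj_on H ((T1 ^^ m1) ((T2 ^^ m2) ((V ^^ n) h))) = (S1 ^^ m1) ((S2 ^^ m2) ((P ^^ n) h))"
    if "h \<in> H" for m1 m2 n h
    using proj_on_funpow_eq_of_adj_on_eq[OF H T1 S1 T1_S1] proj_on_funpow_eq_of_adj_on_eq[OF H T2 S2 T2_S2]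
      proj_on_funpow_eq_of_adj_on_eq[OF H V P V_P] proj_on_self[OF H that]
    by simp
  thus ?thesis unfolding gamma3_isometric_dilation_def using iso by blast
qed

lemma adj_on_eq_of_minimal_dilation:
  fixes H :: "'a::chilbert set"
  assumes H: "closed_csubspace H" and contraction: "gamma3_contraction H S1 S2 P"
    and dilation: "gamma3_isometric_dilation N H S1 S2 P T1 T2 V"
    and minimal: "minimal_dilation H T1 T2 V" and h: "h \<in> H"
  shows "adj_on UNIV T1 h = adj_on H S1 h" "adj_on UNIV T2 h = adj_on H S2 h"
    "adj_on UNIV V h = adj_on H P h"
proof -
  have iso: "gamma3_isometry N UNIV T1 T2 V"
    and proj_T: "\<And>i j k h'. h' \<in> H \<Longrightarrow> proj_on H (triple_pow T1 T2 V i j k h') = triple_pow S1 S2 P i j k h'"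
    using dilation unfolding gamma3_isometric_dilation_def triple_pow_def by auto
  have T1: "bounded_op_on UNIV T1" and T2: "bounded_op_on UNIV T2" and V: "bounded_op_on UNIV V"
    using iso unfolding gamma3_isometry_def by auto
  note T_pow = triple_pow_Suc1[of UNIV, simplified, OF gamma3_isometry_commute[OF iso]]
    triple_pow_Suc2[of UNIV, simplified, OF gamma3_isometry_commute[OF iso]]
    triple_pow_Suc3[of UNIV, simplified, OF gamma3_isometry_commute[OF iso]]
  have S1: "bounded_op_on H S1" and S2: "bounded_op_on H S2" and P: "bounded_op_on H P"
    and S_commute: "commute_on H S1 S2" "commute_on H S1 P" "commute_on H S2 P"
    using contraction unfolding gamma3_contraction_def by auto
  have S_mem: "\<forall>x\<in>H. S1 x \<in> H" "\<forall>x\<in>H. S2 x \<in> H" "\<forall>x\<in>H. P x \<in> H"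
    using S1 S2 P unfolding bounded_op_on_def by auto
  note S_pow = triple_pow_Suc1[OF S_mem S_commute] triple_pow_Suc2[OF S_mem S_commute]
    triple_pow_Suc3[OF S_mem S_commute]
  define G where "G = {triple_pow T1 T2 V i j k h' | i j k h'. h' \<in> H}"
  have dense: "closure (cspan G) = UNIV"
    using minimal unfolding minimal_dilation_def G_def triple_pow_def .
  have "proj_on H (T1 X) = S1 (proj_on H X) \<and> proj_on H (T2 X) = S2 (proj_on H X)
      \<and> proj_on H (V X) = P (proj_on H X)" if "X \<in> G" for X
  proof -
    obtain i j k h' where X: "X = triple_pow T1 T2 V i j k h'" and h': "h' \<in> H"
      using \<open>X \<in> G\<close> unfolding G_def by blast
    show ?thesis unfolding X using T_pow S_pow[OF h'] proj_T[OF h'] by simp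
  qed
  thus "adj_on UNIV T1 h = adj_on H S1 h" "adj_on UNIV T2 h = adj_on H S2 h"
    "adj_on UNIV V h = adj_on H P h"
    using adj_on_eq_of_dense_compression[OF H _ _ dense _ h] T1 T2 V S1 S2 P by auto
qed

theorem proposition6p3:
  fixes H :: "'a::chilbert set"
    and S1 S2 P T1 T2 V :: "'a \<Rightarrow> 'a"
  assumes "closed_csubspace H"
    and "gamma3_contraction H S1 S2 P"
  shows "(gamma3_isometric_dilation TYPE('n::chilbert) H S1 S2 P T1 T2 V
            \<and> minimal_dilation H T1 T2 V
          \<longrightarrow> gamma3_coisometric_extension TYPE('n) H
                (adj_on H S1) (adj_on H S2) (adj_on H P)
                (adj_on UNIV T1) (adj_on UNIV T2) (adj_on UNIV V))
       \<and> (gamma3_isometry TYPE('n) UNIV T1 T2 V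
            \<and> gamma3_coisometric_extension TYPE('n) H
                (adj_on H S1) (adj_on H S2) (adj_on H P)
                (adj_on UNIV T1) (adj_on UNIV T2) (adj_on UNIV V)
          \<longrightarrow> gamma3_isometric_dilation TYPE('n) H S1 S2 P T1 T2 V)"
proof -
  have S: "bounded_op_on H S1" "bounded_op_on H S2" "bounded_op_on H P"
    using assms(2) unfolding gamma3_contraction_def by auto
  show ?thesis
  proof (intro conjI impI; elim conjE)
    assume dilation: "gamma3_isometric_dilation TYPE('n) H S1 S2 P T1 T2 V"
      and minimal: "minimal_dilation H T1 T2 V"
    have "gamma3_isometry TYPE('n) UNIV T1 T2 V"
      using dilation unfolding gamma3_isometric_dilation_def by simp
    thus "gamma3_coisometric_extension TYPE('n) H (adj_on H S1) (adj_on H S2) (adj_on H P)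
        (adj_on UNIV T1) (adj_on UNIV T2) (adj_on UNIV V)"
      unfolding gamma3_coisometric_extension_def
      using gamma3_coisometry_adj_on_UNIV adj_on_mem[OF assms(1) S(1)] adj_on_mem[OF assms(1) S(2)]
        adj_on_mem[OF assms(1) S(3)] adj_on_eq_of_minimal_dilation[OF assms dilation minimal]
      by simp
  next
    assume iso: "gamma3_isometry TYPE('n) UNIV T1 T2 V"
      and extension: "gamma3_coisometric_extension TYPE('n) H (adj_on H S1) (adj_on H S2)
        (adj_on H P) (adj_on UNIV T1) (adj_on UNIV T2) (adj_on UNIV V)"
    show "gamma3_isometric_dilation TYPE('n) H S1 S2 P T1 T2 V"
      using isometric_dilation_of_adj_on_eq[OF assms(1) S iso] extension
      unfolding gamma3_coisometric_extension_def by simp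
  qed
qed

end
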